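(* For $d\ge 4$ and $\ell\ge 4$, the cyclic Kautz digraph $CK(d,\ell)$ has diameter $D=2\ell-2$.
   Context: The cyclic Kautz digraph $CK(d,\ell)$ has vertex set $\{x_1\ldots x_\ell\in\mathbb Z_{d+1}^\ell : x_i\neq x_{i+1}\ (1\le i\le \ell-1),\ x_\ell\neq x_1\}$ and arcs $x_1x_2\ldots x_\ell\to x_2\ldots x_\ell y$ for every $y\in\mathbb Z_{d+1}$ with $y\neq x_2,x_\ell$. Distances are directed distances; the diameter is the maximum distance over all ordered pairs of vertices. *)

theory Defs
  imports Main
begin

text \<open>Cyclic Kautz digraph CK(d,l). Vertices are words x_1...x_l over the alphabet
  Z_{d+1}, represented as lists of naturals below d+1 (index i of the list = x_{i+1}).\<close>

definition ck_vertex :: "nat \<Rightarrow> nat \<Rightarrow> nat list \<Rightarrow> bool" where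
  "ck_vertex d l xs \<longleftrightarrow>
     length xs = l \<and> (\<forall>i<l. xs ! i < d + 1) \<and>
     (\<forall>i. i + 1 < l \<longrightarrow> xs ! i \<noteq> xs ! (i + 1)) \<and>
     xs ! (l - 1) \<noteq> xs ! 0"

definition ck_arc :: "nat \<Rightarrow> nat \<Rightarrow> nat list \<Rightarrow> nat list \<Rightarrow> bool" where
  "ck_arc d l xs ys \<longleftrightarrow>
     ck_vertex d l xs \<and>
     (\<exists>y. y < d + 1 \<and> y \<noteq> xs ! 1 \<and> y \<noteq> xs ! (l - 1) \<and> ys = tl xs @ [y])"

definition ck_dist :: "nat \<Rightarrow> nat \<Rightarrow> nat list \<Rightarrow> nat list \<Rightarrow> nat" where
  "ck_dist d l xs ys = (LEAST n. (ck_arc d l ^^ n) xs ys)"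

text \<open>Diameter: maximum distance over all ordered pairs of vertices
  (meaningful when the digraph is strongly connected, which we assert separately).\<close>
definition ck_diameter :: "nat \<Rightarrow> nat \<Rightarrow> nat" where
  "ck_diameter d l = Max {ck_dist d l xs ys | xs ys. ck_vertex d l xs \<and> ck_vertex d l ys}"

end

(*
  Walks of length n from x correspond to words w_0 ... w_(l+n-1) with prefix x in which every
  letter w_j, j >= l, differs from w_(j-1) and from w_(j+1-l), the last and the second letter of
  the window w_(j-l) ... w_(j-1); the length-l windows of w are the vertices visited.

  Upper bound: after x write l-1-s free letters and then y, where s = 1 unless y_0 = x_(l-1), in
  which case s = 2 moves y one place closer.  Each free letter must avoid its predecessor, the
  letter l-1 places back, the letter of y that will look back at it, and y_0; with d+1 >= 5
  letters this is always possible, giving a walk of length 2l-1-s <= 2l-2.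

  Lower bound: for x = ... 1 0 1 2 and y = 0 2 1 0 1 ... 3 (0 and 1 alternating in between), a
  walk of length n < l would make the overlapping parts of x and y agree, and one of length
  l <= n < 2l-2 would make some letter of y equal to the letter l-1 places back, which lies in x.
*)

theory Submission
  imports Defs
begin

lemma ex_less_not_in:
  assumes "finite A" "card A < n"
  shows "\<exists>c<n. c \<notin> A"
proof (rule ccontr)
  assume "\<not> ?thesis"
  then have "{..<n} \<subseteq> A" by auto
  then have "card {..<n} \<le> card A" using card_mono[OF assms(1)] by blast
  then show False using assms(2) by simp
qed

lemma mod_2_Suc_neq: "Suc n mod 2 \<noteq> (n::nat) mod 2"
  by (simp add: mod_Suc)

definition ck_walk_word :: "nat \<Rightarrow> nat \<Rightarrow> nat list \<Rightarrow> bool" where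
  "ck_walk_word d l w \<longleftrightarrow> (\<forall>j. l \<le> j \<and> j < length w \<longrightarrow>
      w ! j < d + 1 \<and> w ! j \<noteq> w ! (j - 1) \<and> w ! j \<noteq> w ! (j + 1 - l))"

lemma ck_walk_word_snoc:
  assumes "2 \<le> l" "l \<le> length w"
  shows "ck_walk_word d l (w @ [c]) \<longleftrightarrow>
    ck_walk_word d l w \<and> c < d + 1 \<and> c \<noteq> last w \<and> c \<noteq> w ! (length w + 1 - l)"
proof -
  let ?P = "\<lambda>u j. u ! j < d + 1 \<and> u ! j \<noteq> u ! (j - 1) \<and> u ! j \<noteq> u ! (j + 1 - l)"
  have old: "?P (w @ [c]) j = ?P w j" if "l \<le> j" "j < length w" for j
  proof -
    have "j - 1 < length w" "j + 1 - l < length w" using that assms(1) by auto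
    then show ?thesis using that by (simp add: nth_append)
  qed
  have new: "?P (w @ [c]) (length w) \<longleftrightarrow> c < d + 1 \<and> c \<noteq> last w \<and> c \<noteq> w ! (length w + 1 - l)"
  proof -
    have "w \<noteq> []" "length w - 1 < length w" "length w + 1 - l < length w" using assms by auto
    then show ?thesis by (simp add: nth_append last_conv_nth)
  qed
  have "ck_walk_word d l (w @ [c]) \<longleftrightarrow>
      (\<forall>j. l \<le> j \<and> j < length w \<longrightarrow> ?P (w @ [c]) j) \<and> ?P (w @ [c]) (length w)"
    unfolding ck_walk_word_def using assms(2)
    by (auto simp del: nth_append_length simp: less_Suc_eq)
  then show ?thesis using old new unfolding ck_walk_word_def by auto
qed

lemma ck_arc_vertex:
  assumes "2 \<le> l" "ck_arc d l xs ys"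
  shows "ck_vertex d l ys"
proof -
  from assms(2) obtain y where v: "ck_vertex d l xs"
    and y: "y < d + 1" "y \<noteq> xs ! 1" "y \<noteq> xs ! (l - 1)" and ys: "ys = tl xs @ [y]"
    unfolding ck_arc_def by blast
  have "length xs = l" using v unfolding ck_vertex_def by simp
  then have nth: "ys ! i = (if i < l - 1 then xs ! Suc i else y)" if "i < l" for i
    using that assms(1) by (auto simp: ys nth_append nth_tl)
  show ?thesis unfolding ck_vertex_def
  proof (intro conjI allI impI)
    show "length ys = l" using ys \<open>length xs = l\<close> assms(1) by simp
    show "ys ! i < d + 1" if "i < l" for i
      using v y that nth[OF that] unfolding ck_vertex_def by auto
    show "ys ! i \<noteq> ys ! (i + 1)" if "i + 1 < l" for i
      using v y that nth[of i] nth[of "i + 1"] unfolding ck_vertex_def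
      by (cases "Suc i = l - 1") auto
    show "ys ! (l - 1) \<noteq> ys ! 0" using y nth[of "l - 1"] nth[of 0] assms(1) by auto
  qed
qed

lemma relpowp_ck_arc_vertex:
  assumes "2 \<le> l" "(ck_arc d l ^^ n) xs ys" "ck_vertex d l xs"
  shows "ck_vertex d l ys"
  using assms(2,3)
proof (induction n arbitrary: ys)
  case (Suc n)
  then show ?case using ck_arc_vertex[OF assms(1)] by auto
qed simp

lemma ck_arc_drop_iff_snoc:
  assumes "2 \<le> l" "length w = l + n" "ck_vertex d l (drop n w)" "ck_walk_word d l w"
  shows "ck_arc d l (drop n w) y \<longleftrightarrow> (\<exists>c. ck_walk_word d l (w @ [c]) \<and> y = drop (Suc n) (w @ [c]))"
proof -
  have "w \<noteq> []" using assms(1,2) by auto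
  then have "drop n w ! 1 = w ! (length w + 1 - l)" "drop n w ! (l - 1) = last w"
    using assms(1,2) by (auto simp: last_conv_nth add.commute)
  moreover have "drop (Suc n) (w @ [c]) = tl (drop n w) @ [c]" for c
    using assms(1,2) by (simp add: drop_Suc tl_drop)
  ultimately show ?thesis
    using assms unfolding ck_arc_def by (auto simp: ck_walk_word_snoc)
qed

lemma relpowp_ck_arc_iff_walk_word:
  assumes "2 \<le> l" "ck_vertex d l x"
  shows "(ck_arc d l ^^ n) x y \<longleftrightarrow>
    (\<exists>w. length w = l + n \<and> take l w = x \<and> drop n w = y \<and> ck_walk_word d l w)"
proof (induction n arbitrary: y)
  case 0
  have "length x = l" using assms(2) unfolding ck_vertex_def by simp
  then show ?case by (auto simp: ck_walk_word_def)
next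
  case (Suc n)
  show ?case
  proof
    assume "(ck_arc d l ^^ Suc n) x y"
    then obtain y' where walk: "(ck_arc d l ^^ n) x y'" and arc: "ck_arc d l y' y" by auto
    obtain w where w: "length w = l + n" "take l w = x" "drop n w = y'" "ck_walk_word d l w"
      using walk Suc.IH by blast
    have "ck_vertex d l (drop n w)"
      using relpowp_ck_arc_vertex[OF assms(1) walk assms(2)] w(3) by simp
    then obtain c where "ck_walk_word d l (w @ [c])" "y = drop (Suc n) (w @ [c])"
      using arc ck_arc_drop_iff_snoc[OF assms(1) w(1) _ w(4)] w(3) by blast
    then show "\<exists>w'. length w' = l + Suc n \<and> take l w' = x \<and> drop (Suc n) w' = y \<and>
        ck_walk_word d l w'"
      using w(1,2) by (intro exI[of _ "w @ [c]"]) auto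
  next
    assume "\<exists>w'. length w' = l + Suc n \<and> take l w' = x \<and> drop (Suc n) w' = y \<and>
      ck_walk_word d l w'"
    then obtain w' where w': "length w' = l + Suc n" "take l w' = x" "drop (Suc n) w' = y"
      "ck_walk_word d l w'" by blast
    define w where "w = butlast w'"
    have split: "w' = w @ [last w']"
      using w'(1) unfolding w_def by (intro append_butlast_last_id[symmetric]) auto
    have len: "length w = l + n" using w'(1) unfolding w_def by simp
    have ww: "ck_walk_word d l w"
      using w'(4) ck_walk_word_snoc[OF assms(1), of w d "last w'"] len split by simp
    have "take l w = x" using w'(2) len by (subst (asm) split) simp
    then have walk: "(ck_arc d l ^^ n) x (drop n w)" using Suc.IH len ww by blast
    have "ck_vertex d l (drop n w)" using relpowp_ck_arc_vertex[OF assms(1) walk assms(2)] .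
    then have "ck_arc d l (drop n w) y"
      using ck_arc_drop_iff_snoc[OF assms(1) len _ ww] w'(3,4) split by metis
    then show "(ck_arc d l ^^ Suc n) x y" using walk by (auto intro: relpowp_Suc_I)
  qed
qed

lemma ck_walk_word_extend:
  assumes "4 \<le> d" "2 \<le> l" "l \<le> length u" "ck_walk_word d l u"
  shows "\<exists>z. length z = k \<and> ck_walk_word d l (u @ z) \<and> (\<forall>i<k. z ! i \<noteq> a i \<and> z ! i \<noteq> b i)"
proof (induction k)
  case 0
  show ?case using assms(4) by simp
next
  case (Suc k)
  then obtain z where z: "length z = k" "ck_walk_word d l (u @ z)" "\<forall>i<k. z ! i \<noteq> a i \<and> z ! i \<noteq> b i"
    by blast
  let ?v = "u @ z"
  have "\<exists>c<5. c \<notin> {last ?v, ?v ! (length ?v + 1 - l), a k, b k}"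
    using card_length[of "[last ?v, ?v ! (length ?v + 1 - l), a k, b k]"]
    by (intro ex_less_not_in) simp_all
  then obtain c where c: "c < 5" "c \<notin> {last ?v, ?v ! (length ?v + 1 - l), a k, b k}"
    by blast
  have len: "l \<le> length ?v" using assms(3) by simp
  have "ck_walk_word d l (?v @ [c])"
    unfolding ck_walk_word_snoc[OF assms(2) len] using z(2) c assms(1) by simp
  moreover have "\<forall>i<Suc k. (z @ [c]) ! i \<noteq> a i \<and> (z @ [c]) ! i \<noteq> b i"
    using z(1,3) c by (auto simp: nth_append less_Suc_eq)
  ultimately show ?case using z(1) by (intro exI[of _ "z @ [c]"]) auto
qed

lemma ck_walk_word_append_vertex:
  assumes "2 \<le> l" "l \<le> length u" "ck_walk_word d l u" "ck_vertex d l y" "y ! 0 \<noteq> last u"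
    and shifted: "\<And>m. m + 1 < l \<Longrightarrow> y ! m \<noteq> u ! (length u + m + 1 - l)"
  shows "ck_walk_word d l (u @ y)"
  unfolding ck_walk_word_def
proof (intro allI impI)
  fix j assume j: "l \<le> j \<and> j < length (u @ y)"
  let ?w = "u @ y"
  show "?w ! j < d + 1 \<and> ?w ! j \<noteq> ?w ! (j - 1) \<and> ?w ! j \<noteq> ?w ! (j + 1 - l)"
  proof (cases "j < length u")
    case True
    have "j - 1 < length u" "j + 1 - l < length u" using True assms(1) by auto
    then show ?thesis using True j assms(3) unfolding ck_walk_word_def by (auto simp: nth_append)
  next
    case False
    define m where "m = j - length u"
    have y: "length y = l" "\<forall>i<l. y ! i < d + 1" "\<forall>i. i + 1 < l \<longrightarrow> y ! i \<noteq> y ! (i + 1)"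
      "y ! (l - 1) \<noteq> y ! 0" using assms(4) unfolding ck_vertex_def by auto
    have m: "m < l" "j = length u + m" using False j y(1) unfolding m_def by auto
    have "?w ! (j - 1) = (if m = 0 then last u else y ! (m - 1))"
      using m assms(1,2) by (auto simp: nth_append last_conv_nth)
    moreover have "?w ! (j + 1 - l) = (if m = l - 1 then y ! 0 else u ! (length u + m + 1 - l))"
      using m assms(1,2) by (auto simp: nth_append)
    moreover have "?w ! j = y ! m" using m by (simp add: nth_append)
    moreover have "y ! (m - 1) \<noteq> y ! m" if "m \<noteq> 0"
      using y(3)[rule_format, of "m - 1"] that m(1) by simp
    ultimately show ?thesis
      using m y(2,4) assms(5) shifted[of m] by auto
  qed
qed

lemma ck_vertex_junction:
  assumes "3 \<le> l" "ck_vertex d l x" "ck_vertex d l y"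
    and s: "s = (if y ! 0 = x ! (l - 1) then 2 else 1)" and "m < s"
  shows "y ! m \<noteq> x ! (l - s + m)"
proof (cases "y ! 0 = x ! (l - 1)")
  case True
  have "x ! (l - 2) \<noteq> x ! (l - 2 + 1)" "y ! 0 \<noteq> y ! (0 + 1)"
    using assms(1,2,3) unfolding ck_vertex_def by auto
  moreover have "l - 2 + 1 = l - 1" using assms(1) by simp
  moreover have "m = 0 \<or> m = 1" using \<open>m < s\<close> True s by auto
  ultimately show ?thesis using True s by auto
next
  case False
  then show ?thesis using s \<open>m < s\<close> by simp
qed

lemma ck_walk_word_bridge:
  assumes "4 \<le> l" and x: "ck_vertex d l x" and y: "ck_vertex d l y"
    and s: "s = (if y ! 0 = x ! (l - 1) then 2 else 1)"
    and z: "length z = l - 1 - s" "ck_walk_word d l (x @ z)"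
      "\<forall>i < l - 1 - s. z ! i \<noteq> y ! (i + s) \<and> z ! i \<noteq> y ! 0"
  shows "ck_walk_word d l (x @ z @ y)"
proof -
  define k where "k = l - 1 - s"
  have ks: "k + s + 1 = l" "1 \<le> k" using assms(1) unfolding k_def s by auto
  have lx: "length x = l" using x unfolding ck_vertex_def by simp
  have zk: "length z = k" "\<forall>i<k. z ! i \<noteq> y ! (i + s) \<and> z ! i \<noteq> y ! 0"
    using z(1,3) unfolding k_def by auto
  have "z \<noteq> []" using zk(1) ks(2) by auto
  then have "last (x @ z) = z ! (k - 1)" using zk(1) by (simp add: last_conv_nth[of z])
  moreover have "k - 1 < k" using ks(2) by simp
  ultimately have "y ! 0 \<noteq> last (x @ z)" using zk(2) by metis
  moreover have "y ! m \<noteq> (x @ z) ! (length (x @ z) + m + 1 - l)" if "m + 1 < l" for m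
  proof (cases "m < s")
    case True
    then have "length (x @ z) + m + 1 - l = l - s + m" "l - s + m < length x"
      using lx zk(1) ks(1) by auto
    then have "(x @ z) ! (length (x @ z) + m + 1 - l) = x ! (l - s + m)"
      by (simp add: nth_append)
    moreover have "y ! m \<noteq> x ! (l - s + m)"
      using ck_vertex_junction[OF _ x y s True] assms(1) by simp
    ultimately show ?thesis by simp
  next
    case False
    then have "length (x @ z) + m + 1 - l = l + (m - s)" "m - s < k"
      using lx zk(1) ks(1) that by auto
    then have "(x @ z) ! (length (x @ z) + m + 1 - l) = z ! (m - s)"
      using lx by (simp add: nth_append)
    moreover have "z ! (m - s) \<noteq> y ! (m - s + s)"
      using zk(2) \<open>m - s < k\<close> by blast
    ultimately show ?thesis using False by simp
  qed
  ultimately show ?thesis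
    using assms(1) lx ck_walk_word_append_vertex[OF _ _ z(2) y] by simp
qed

lemma ex_ck_walk_le:
  assumes "4 \<le> d" "4 \<le> l" and x: "ck_vertex d l x" and y: "ck_vertex d l y"
  shows "\<exists>n \<le> 2 * l - 2. (ck_arc d l ^^ n) x y"
proof -
  define s where "s = (if y ! 0 = x ! (l - 1) then 2 else 1 :: nat)"
  define k where "k = l - 1 - s"
  have lx: "length x = l" and ly: "length y = l" using x y unfolding ck_vertex_def by auto
  then have "ck_walk_word d l x" by (simp add: ck_walk_word_def)
  then obtain z where z: "length z = k" "ck_walk_word d l (x @ z)"
      "\<forall>i<k. z ! i \<noteq> y ! (i + s) \<and> z ! i \<noteq> y ! 0"
    using ck_walk_word_extend[OF assms(1), of l x k "\<lambda>i. y ! (i + s)" "\<lambda>_. y ! 0"] assms(2) lx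
    by auto
  then have "ck_walk_word d l (x @ z @ y)"
    using ck_walk_word_bridge[OF assms(2) x y s_def] unfolding k_def by blast
  moreover have "length (x @ z @ y) = l + (l + k)" "take l (x @ z @ y) = x"
    "drop (l + k) (x @ z @ y) = y"
    using lx ly z(1) by auto
  ultimately have "(ck_arc d l ^^ (l + k)) x y"
    using relpowp_ck_arc_iff_walk_word[of l d x "l + k" y] x assms(2) by auto
  moreover have "l + k \<le> 2 * l - 2" using assms(2) unfolding k_def s_def by auto
  ultimately show ?thesis by blast
qed

lemma ck_vertex_map_upt:
  assumes "1 \<le> l"
  shows "ck_vertex d l (map f [0..<l]) \<longleftrightarrow>
    (\<forall>i<l. f i < d + 1) \<and> (\<forall>i. i + 1 < l \<longrightarrow> f i \<noteq> f (i + 1)) \<and> f (l - 1) \<noteq> f 0"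
  using assms unfolding ck_vertex_def by auto

(* For l = 6 the words are 1 0 1 0 1 2 and 0 2 1 0 1 3. *)
definition far_src :: "nat \<Rightarrow> nat \<Rightarrow> nat" where
  "far_src l i = (if i = l - 1 then 2 else (l - 1 - i) mod 2)"

definition far_dst :: "nat \<Rightarrow> nat \<Rightarrow> nat" where
  "far_dst l i = (if i = 0 then 0 else if i = 1 then 2 else if i = l - 1 then 3 else (i + 1) mod 2)"

lemma far_src_eq_2_iff: "far_src l i = 2 \<longleftrightarrow> i = l - 1"
proof -
  have "(l - 1 - i) mod 2 \<noteq> 2" by simp
  then show ?thesis unfolding far_src_def by simp
qed

lemma far_dst_eq_2_iff: "far_dst l i = 2 \<longleftrightarrow> i = 1"
proof -
  have "(i + 1) mod 2 \<noteq> 2" by simp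
  then show ?thesis unfolding far_dst_def by simp
qed

lemma ck_vertex_far_src:
  assumes "2 \<le> d" "2 \<le> l"
  shows "ck_vertex d l (map (far_src l) [0..<l])"
  unfolding ck_vertex_map_upt[OF order.trans[OF one_le_numeral assms(2)]]
proof (intro conjI allI impI)
  show "far_src l i < d + 1" for i using assms(1) unfolding far_src_def by auto
  show "far_src l i \<noteq> far_src l (i + 1)" if "i + 1 < l" for i
  proof (cases "i + 1 = l - 1")
    case True
    then have "far_src l (i + 1) = 2" "far_src l i \<noteq> 2" using that far_src_eq_2_iff[of l] by auto
    then show ?thesis by simp
  next
    case False
    have "l - 1 - i = Suc (l - 1 - (i + 1))" using that by simp
    then show ?thesis using False that mod_2_Suc_neq unfolding far_src_def by simp
  qed
  have "far_src l (l - 1) = 2" "far_src l 0 \<noteq> 2" using assms(2) far_src_eq_2_iff[of l] by auto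
  then show "far_src l (l - 1) \<noteq> far_src l 0" by simp
qed

lemma ck_vertex_far_dst:
  assumes "3 \<le> d" "2 \<le> l"
  shows "ck_vertex d l (map (far_dst l) [0..<l])"
  unfolding ck_vertex_map_upt[OF order.trans[OF one_le_numeral assms(2)]]
proof (intro conjI allI impI)
  show "far_dst l i < d + 1" for i using assms(1) unfolding far_dst_def by auto
  show "far_dst l i \<noteq> far_dst l (i + 1)" if "i + 1 < l" for i
  proof -
    consider "i = 0" | "i = 1" | "2 \<le> i" "i + 1 = l - 1" | "2 \<le> i" "i + 1 \<noteq> l - 1" by linarith
    then show ?thesis
    proof cases
      case 1
      then show ?thesis by (simp add: far_dst_def)
    next
      case 2
      then show ?thesis using far_dst_eq_2_iff[of l] by (simp add: far_dst_def)
    next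
      case 3
      have "(i + 1) mod 2 \<noteq> 3" by simp
      then show ?thesis using 3 unfolding far_dst_def by simp
    next
      case 4
      then show ?thesis using that mod_2_Suc_neq[of "i + 1"] unfolding far_dst_def by simp
    qed
  qed
  show "far_dst l (l - 1) \<noteq> far_dst l 0" using assms(2) unfolding far_dst_def by simp
qed

lemma far_src_dst_mismatch:
  assumes "4 \<le> l" "n < l"
  shows "\<exists>i. n + i < l \<and> far_src l (n + i) \<noteq> far_dst l i"
proof (cases "n = l - 2")
  case True
  then have "l - 1 - n = 1" "n \<noteq> l - 1" using assms by auto
  then have "far_src l n \<noteq> far_dst l 0" by (simp add: far_src_def far_dst_def)
  then show ?thesis using assms(2) by (intro exI[of _ 0]) simp
next
  case False
  then have "n + (l - 1 - n) = l - 1" "l - 1 - n \<noteq> 1" using assms by auto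
  then have "far_src l (n + (l - 1 - n)) \<noteq> far_dst l (l - 1 - n)"
    by (simp add: far_dst_eq_2_iff far_src_def)
  then show ?thesis using assms by (intro exI[of _ "l - 1 - n"]) simp
qed

lemma far_dst_src_collision:
  assumes "4 \<le> l" "1 \<le> t" "t \<le> l - 2"
  shows "\<exists>m. t + m < l \<and> far_dst l m = far_src l (t + m)"
proof -
  consider "even (l - 1 - t)" | "t = l - 2" | "odd (l - 1 - t)" "t \<noteq> l - 2" by blast
  then show ?thesis
  proof cases
    case 1
    then have "far_dst l 0 = far_src l t"
      using assms by (simp add: far_src_def far_dst_def even_iff_mod_2_eq_zero)
    then show ?thesis using assms by (intro exI[of _ 0]) simp
  next
    case 2
    then have "far_dst l 1 = far_src l (t + 1)" using assms by (simp add: far_src_def far_dst_def)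
    then show ?thesis using 2 assms by (intro exI[of _ 1]) simp
  next
    case 3
    from 3(1) obtain q where q: "l - 1 - t = 2 * q + 1" by (rule oddE)
    then have "q \<noteq> 0" using 3(2) assms by auto
    then have "t + 2 < l - 1" "l - 1 - (t + 2) = 2 * (q - 1) + 1" using q by auto
    moreover have "2 \<noteq> l - 1" using assms by simp
    ultimately have "far_dst l 2 = far_src l (t + 2)" by (simp add: far_src_def far_dst_def)
    then show ?thesis using \<open>t + 2 < l - 1\<close> by (intro exI[of _ 2]) simp
  qed
qed

lemma far_walk_word_length_ge:
  assumes "4 \<le> l" and w: "length w = l + n" "take l w = map (far_src l) [0..<l]"
    "drop n w = map (far_dst l) [0..<l]" "ck_walk_word d l w"
  shows "2 * l - 2 \<le> n"
proof (rule ccontr)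
  assume short: "\<not> 2 * l - 2 \<le> n"
  have src: "w ! i = far_src l i" if "i < l" for i
    using arg_cong[OF w(2), of "\<lambda>u. u ! i"] that by simp
  have dst: "w ! (n + i) = far_dst l i" if "i < l" for i
    using arg_cong[OF w(3), of "\<lambda>u. u ! i"] that w(1) by simp
  show False
  proof (cases "n < l")
    case True
    then obtain i where "n + i < l" "far_src l (n + i) \<noteq> far_dst l i"
      using far_src_dst_mismatch assms(1) by blast
    then show False using src[of "n + i"] dst[of i] by simp
  next
    case False
    have "1 \<le> n + 1 - l" "n + 1 - l \<le> l - 2" using False short by auto
    then obtain m where m: "n + 1 - l + m < l" "far_dst l m = far_src l (n + 1 - l + m)"
      using far_dst_src_collision assms(1) by blast
    have "l \<le> n + m" "n + m < length w" "n + m + 1 - l = n + 1 - l + m"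
      using False m(1) w(1) by auto
    then have "w ! (n + m) \<noteq> w ! (n + 1 - l + m)" using w(4) unfolding ck_walk_word_def by metis
    then show False using m src dst[of m] by simp
  qed
qed

lemma far_walk_length_ge:
  assumes "2 \<le> d" "4 \<le> l" "(ck_arc d l ^^ n) (map (far_src l) [0..<l]) (map (far_dst l) [0..<l])"
  shows "2 * l - 2 \<le> n"
  using assms relpowp_ck_arc_iff_walk_word[OF _ ck_vertex_far_src] far_walk_word_length_ge by auto

lemma ck_dist_le: "(ck_arc d l ^^ n) xs ys \<Longrightarrow> ck_dist d l xs ys \<le> n"
  unfolding ck_dist_def by (rule Least_le)

lemma relpowp_ck_dist: "(ck_arc d l ^^ n) xs ys \<Longrightarrow> (ck_arc d l ^^ ck_dist d l xs ys) xs ys"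
  unfolding ck_dist_def by (rule LeastI)

lemma ck_diameter_eqI:
  assumes upper: "\<And>xs ys. ck_vertex d l xs \<Longrightarrow> ck_vertex d l ys \<Longrightarrow> \<exists>n \<le> D. (ck_arc d l ^^ n) xs ys"
    and vertices: "ck_vertex d l xs\<^sub>0" "ck_vertex d l ys\<^sub>0"
    and lower: "\<And>n. (ck_arc d l ^^ n) xs\<^sub>0 ys\<^sub>0 \<Longrightarrow> D \<le> n"
  shows "ck_diameter d l = D"
proof -
  let ?S = "{ck_dist d l xs ys | xs ys. ck_vertex d l xs \<and> ck_vertex d l ys}"
  have "?S \<subseteq> {..D}" using upper ck_dist_le by fastforce
  moreover obtain n where "(ck_arc d l ^^ n) xs\<^sub>0 ys\<^sub>0" "n \<le> D" using upper[OF vertices] by blast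
  then have "ck_dist d l xs\<^sub>0 ys\<^sub>0 = D"
    using ck_dist_le lower relpowp_ck_dist by (metis le_antisym le_trans)
  then have "D \<in> ?S" using vertices by blast
  ultimately show ?thesis unfolding ck_diameter_def by (intro Max_eqI) (auto intro: finite_subset)
qed

theorem theorem1:
  fixes d l :: nat
  assumes "d \<ge> 4" and "l \<ge> 4"
  shows "(\<forall>xs ys. ck_vertex d l xs \<longrightarrow> ck_vertex d l ys \<longrightarrow> (\<exists>n. (ck_arc d l ^^ n) xs ys))
         \<and> ck_diameter d l = 2 * l - 2"
proof
  show "\<forall>xs ys. ck_vertex d l xs \<longrightarrow> ck_vertex d l ys \<longrightarrow> (\<exists>n. (ck_arc d l ^^ n) xs ys)"
    using ex_ck_walk_le[OF assms] by blast
  show "ck_diameter d l = 2 * l - 2"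
  proof (rule ck_diameter_eqI)
    show "ck_vertex d l (map (far_src l) [0..<l])" "ck_vertex d l (map (far_dst l) [0..<l])"
      using assms by (simp_all add: ck_vertex_far_src ck_vertex_far_dst)
  qed (use assms ex_ck_walk_le far_walk_length_ge[of d l] in auto)
qed

end
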